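(* Let $\Gamma=(\gamma_n)_{n\ge1}$ be distinct complex numbers with $\inf_n|\gamma_{n+1}|/|\gamma_n|>1$, and let $v=(v_n)$ be positive numbers with $\sum_nv_n<\infty$. If $\mu$ is a nonnegative measure on $\mathbb{C}$ with $\mu(\Gamma)=0$, then $H_{(\Gamma,v)}$ is bounded from $\ell^2_v$ to $L^2(\mathbb{C},\mu)$ if and only if \[ \sup_{n\ge1}\int_{\mathbb{C}}\frac{v_n\,d\mu(z)}{|z-\gamma_n|^2}<\infty. \]
   Context: $\ell^2_v=\{(a_n):\sum|a_n|^2v_n<\infty\}$; for $z\in\mathbb{C}\setminus\Gamma$, $H_{(\Gamma,v)}a(z)=\sum_na_nv_n/(z-\gamma_n)$. *)

theory Defs
  imports "HOL-Analysis.Analysis"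
begin

definition weighted_l2 :: "(nat \<Rightarrow> real) \<Rightarrow> (nat \<Rightarrow> complex) set" where
  "weighted_l2 v = {a. summable (\<lambda>n. (cmod (a n))\<^sup>2 * v n)}"

definition H_op :: "(nat \<Rightarrow> complex) \<Rightarrow> (nat \<Rightarrow> real) \<Rightarrow> (nat \<Rightarrow> complex) \<Rightarrow> complex \<Rightarrow> complex" where
  "H_op \<gamma> v a z = (\<Sum>n. a n * complex_of_real (v n) / (z - \<gamma> n))"

definition H_bounded :: "(nat \<Rightarrow> complex) \<Rightarrow> (nat \<Rightarrow> real) \<Rightarrow> complex measure \<Rightarrow> bool" where
  "H_bounded \<gamma> v \<mu> \<longleftrightarrow> (\<exists>C::real. \<forall>a\<in>weighted_l2 v.
      H_op \<gamma> v a \<in> borel_measurable \<mu> \<and>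
      (\<integral>\<^sup>+ z. ennreal ((cmod (H_op \<gamma> v a z))\<^sup>2) \<partial>\<mu>)
        \<le> ennreal (C * (\<Sum>n. (cmod (a n))\<^sup>2 * v n)))"

end

theory Submission
  imports Defs
begin

text \<open>
  Test functions give necessity: applying \<open>H\<close> to the \<open>n\<close>-th unit vector yields
  \<open>v\<^sub>n / (z - \<gamma>\<^sub>n)\<close>, whose squared \<open>L\<^sup>2(\<mu>)\<close> norm is \<open>v\<^sub>n\<close> times the \<open>n\<close>-th kernel integral.
  For sufficiency fix \<open>z \<notin> \<Gamma>\<close>, put \<open>u\<^sub>n = v\<^sub>n / \<bar>z - \<gamma>\<^sub>n\<bar>\<^sup>2\<close> and \<open>D = 16 / \<bar>z - \<gamma>\<^sub>0\<bar>\<^sup>2\<close>, and apply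
  Cauchy--Schwarz with the weights \<open>u\<^sub>n + D\<close>:
  \<open>\<bar>H a z\<bar>\<^sup>2 \<le> (\<Sum> \<bar>a\<^sub>n\<bar>\<^sup>2 v\<^sub>n (u\<^sub>n + D)) (\<Sum> u\<^sub>n / (u\<^sub>n + D))\<close>.
  If \<open>\<gamma>\<^sub>n\<close> is at distance at least \<open>\<bar>z - \<gamma>\<^sub>0\<bar>/4\<close> from \<open>z\<close> then \<open>u\<^sub>n \<le> v\<^sub>n D\<close>; all other \<open>\<gamma>\<^sub>n\<close> lie in an
  annulus \<open>\<alpha> \<le> \<bar>w\<bar> \<le> 3\<alpha>\<close>, which by lacunarity contains at most \<open>L\<close> of them for a fixed \<open>L\<close>.
  Hence the second factor is at most \<open>\<Sum> v\<^sub>n + L\<close> uniformly in \<open>z\<close>, and integrating the first factor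
  term by term costs only the kernel integrals of index \<open>n\<close> and \<open>0\<close>.
\<close>

lemma geometric_growth:
  fixes r :: "nat \<Rightarrow> real"
  assumes step: "\<And>n. q * r n \<le> r (Suc n)" and "0 \<le> q"
  shows "q ^ k * r m \<le> r (m + k)"
proof (induction k)
  case (Suc k)
  have "q ^ Suc k * r m = q * (q ^ k * r m)" by simp
  also have "\<dots> \<le> q * r (m + k)" using Suc \<open>0 \<le> q\<close> by (rule mult_left_mono)
  also have "\<dots> \<le> r (m + Suc k)" using step[of "m + k"] by simp
  finally show ?case .
qed simp

lemma geometric_growth_annulus:
  fixes r :: "nat \<Rightarrow> real"
  assumes q: "1 < q" and step: "\<And>n. q * r n \<le> r (Suc n)"
    and L: "3 < q ^ L" and \<alpha>: "0 < \<alpha>"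
  shows "finite {n. \<alpha> \<le> r n \<and> r n \<le> 3 * \<alpha>}" "card {n. \<alpha> \<le> r n \<and> r n \<le> 3 * \<alpha>} \<le> L"
proof -
  define A where "A = {n. \<alpha> \<le> r n \<and> r n \<le> 3 * \<alpha>}"
  have "finite A \<and> card A \<le> L"
  proof (cases "A = {}")
    case False
    define m where "m = (LEAST n. n \<in> A)"
    have "m \<in> A" using False unfolding m_def by (metis LeastI ex_in_conv)
    have "A \<subseteq> {m..<m + L}"
    proof
      fix n assume "n \<in> A"
      have "m \<le> n" using \<open>n \<in> A\<close> unfolding m_def by (rule Least_le)
      moreover have "n < m + L"
      proof (rule ccontr)
        assume "\<not> n < m + L"
        then have "q ^ L \<le> q ^ (n - m)" using q by (intro power_increasing) auto
        have "\<alpha> \<le> r m" using \<open>m \<in> A\<close> unfolding A_def by simp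
        have "3 * \<alpha> < q ^ L * \<alpha>" using L \<alpha> by simp
        also have "\<dots> \<le> q ^ L * r m" using \<open>\<alpha> \<le> r m\<close> L by simp
        also have "\<dots> \<le> q ^ (n - m) * r m"
          using \<open>q ^ L \<le> q ^ (n - m)\<close> \<open>\<alpha> \<le> r m\<close> \<alpha> by (intro mult_right_mono) auto
        also have "\<dots> \<le> r n"
          using geometric_growth[where q = q and r = r and k = "n - m" and m = m] step q \<open>m \<le> n\<close> by simp
        finally show False using \<open>n \<in> A\<close> unfolding A_def by simp
      qed
      ultimately show "n \<in> {m..<m + L}" by simp
    qed
    then show ?thesis using finite_subset card_mono[of "{m..<m + L}" A] by auto
  qed simp
  then show "finite {n. \<alpha> \<le> r n \<and> r n \<le> 3 * \<alpha>}" "card {n. \<alpha> \<le> r n \<and> r n \<le> 3 * \<alpha>} \<le> L"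
    unfolding A_def by auto
qed

lemma norm_sum_squared_le:
  fixes x :: "'i \<Rightarrow> 'a::real_normed_vector"
  assumes "\<And>i. i \<in> A \<Longrightarrow> (norm (x i))\<^sup>2 \<le> P i * Q i"
    and "\<And>i. i \<in> A \<Longrightarrow> 0 \<le> P i" and "\<And>i. i \<in> A \<Longrightarrow> 0 \<le> Q i"
  shows "(norm (sum x A))\<^sup>2 \<le> sum P A * sum Q A"
proof -
  have "norm (x i) \<le> sqrt (P i) * sqrt (Q i)" if "i \<in> A" for i
    using assms[OF that] by (metis real_le_rsqrt real_sqrt_mult)
  then have "norm (sum x A) \<le> (\<Sum>i\<in>A. sqrt (P i) * sqrt (Q i))"
    using norm_sum[of x A] sum_mono[of A "\<lambda>i. norm (x i)"] by (meson order_trans)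
  then have "(norm (sum x A))\<^sup>2 \<le> (\<Sum>i\<in>A. sqrt (P i) * sqrt (Q i))\<^sup>2"
    by (simp add: power_mono)
  also have "\<dots> \<le> (\<Sum>i\<in>A. (sqrt (P i))\<^sup>2) * (\<Sum>i\<in>A. (sqrt (Q i))\<^sup>2)"
    by (rule Cauchy_Schwarz_ineq_sum)
  also have "\<dots> = sum P A * sum Q A" using assms(2,3) by simp
  finally show ?thesis .
qed

lemma norm_in_annulus_if_close:
  fixes z w c :: complex
  assumes "cmod c \<le> cmod w" and "cmod (z - w) < cmod (z - c) / 4"
  shows "max (cmod c) (cmod z / 2) \<le> cmod w \<and> cmod w \<le> 3 * max (cmod c) (cmod z / 2)"
proof -
  have "cmod z - cmod (z - w) \<le> cmod w" "cmod w \<le> cmod z + cmod (z - w)"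
    using norm_triangle_ineq2[of z w] norm_triangle_ineq2[of w z] norm_minus_commute[of w z]
    by linarith+
  moreover have "cmod (z - c) \<le> cmod z + cmod c" by (rule norm_triangle_ineq4)
  ultimately show ?thesis using assms by (auto simp: max_def)
qed

lemma borel_measurable_if_sets_borel:
  assumes "sets M = sets borel" and "f \<in> borel_measurable borel"
  shows "f \<in> borel_measurable M"
  using assms(2) measurable_cong_sets[OF assms(1) refl] by blast

lemma nn_integral_two_kernels_le:
  fixes \<gamma> :: "nat \<Rightarrow> complex" and v :: "nat \<Rightarrow> real"
  assumes "sets \<mu> = sets borel" and "0 \<le> c" and "0 \<le> v n" and "0 < v 0"
    and bound: "\<And>k. (\<integral>\<^sup>+ z. ennreal (v k / (cmod (z - \<gamma> k))\<^sup>2) \<partial>\<mu>) \<le> ennreal M" and "0 \<le> M"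
  shows "(\<integral>\<^sup>+ z. ennreal (c * (v n / (cmod (z - \<gamma> n))\<^sup>2 + 16 / (cmod (z - \<gamma> 0))\<^sup>2)) \<partial>\<mu>)
    \<le> ennreal (c * (M + 16 * M / v 0))"
proof -
  have meas: "(\<lambda>z. ennreal (v k / (cmod (z - \<gamma> k))\<^sup>2)) \<in> borel_measurable \<mu>" for k
    by (rule borel_measurable_if_sets_borel[OF \<open>sets \<mu> = sets borel\<close>]) measurable
  have c': "0 \<le> 16 * c / v 0" using assms(2,4) by simp
  \<comment> \<open>The constant kernel \<open>16 / \<bar>z - \<gamma> 0\<bar>\<^sup>2\<close> is a multiple of the kernel of index 0.\<close>
  have split: "ennreal (c * (v n / (cmod (z - \<gamma> n))\<^sup>2 + 16 / (cmod (z - \<gamma> 0))\<^sup>2))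
      = ennreal c * ennreal (v n / (cmod (z - \<gamma> n))\<^sup>2)
        + ennreal (16 * c / v 0) * ennreal (v 0 / (cmod (z - \<gamma> 0))\<^sup>2)" for z
  proof -
    have "c * (v n / (cmod (z - \<gamma> n))\<^sup>2 + 16 / (cmod (z - \<gamma> 0))\<^sup>2)
        = c * (v n / (cmod (z - \<gamma> n))\<^sup>2) + 16 * c / v 0 * (v 0 / (cmod (z - \<gamma> 0))\<^sup>2)"
      using \<open>0 < v 0\<close> by (simp add: field_simps)
    also have "ennreal \<dots> = ennreal (c * (v n / (cmod (z - \<gamma> n))\<^sup>2))
        + ennreal (16 * c / v 0 * (v 0 / (cmod (z - \<gamma> 0))\<^sup>2))"
      using assms(2-4) c' by (intro ennreal_plus) auto
    finally show ?thesis by (simp only: ennreal_mult'[OF \<open>0 \<le> c\<close>] ennreal_mult'[OF c'])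
  qed
  have "(\<integral>\<^sup>+ z. ennreal (c * (v n / (cmod (z - \<gamma> n))\<^sup>2 + 16 / (cmod (z - \<gamma> 0))\<^sup>2)) \<partial>\<mu>)
      = ennreal c * (\<integral>\<^sup>+ z. ennreal (v n / (cmod (z - \<gamma> n))\<^sup>2) \<partial>\<mu>)
        + ennreal (16 * c / v 0) * (\<integral>\<^sup>+ z. ennreal (v 0 / (cmod (z - \<gamma> 0))\<^sup>2) \<partial>\<mu>)"
    unfolding split using meas by (simp add: nn_integral_add nn_integral_cmult)
  also have "\<dots> \<le> ennreal c * ennreal M + ennreal (16 * c / v 0) * ennreal M"
    by (intro add_mono mult_left_mono bound) auto
  also have "\<dots> = ennreal (c * (M + 16 * M / v 0))"
    using assms(2,4,6) c' by (simp add: ennreal_mult[symmetric] ennreal_plus[symmetric] algebra_simps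
        del: ennreal_plus)
  finally show ?thesis .
qed

locale lacunary_sequence =
  fixes \<gamma> :: "nat \<Rightarrow> complex" and q :: real
  assumes ratio_gt_1: "1 < q"
    and norm_step: "\<And>n. q * cmod (\<gamma> n) \<le> cmod (\<gamma> (Suc n))"
    and nonzero_0: "\<gamma> 0 \<noteq> 0"
begin

lemma norm_growth: "q ^ k * cmod (\<gamma> m) \<le> cmod (\<gamma> (m + k))"
  using geometric_growth[where r = "\<lambda>n. cmod (\<gamma> n)", OF norm_step] ratio_gt_1 by simp

lemma norm_ge_norm_0: "cmod (\<gamma> 0) \<le> cmod (\<gamma> n)"
proof -
  have "1 \<le> q ^ n" using ratio_gt_1 by simp
  then have "cmod (\<gamma> 0) \<le> q ^ n * cmod (\<gamma> 0)" by (simp add: mult_le_cancel_right1)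
  also have "\<dots> \<le> cmod (\<gamma> n)" using norm_growth[of n 0] by simp
  finally show ?thesis .
qed

lemma eventually_norm_gt: "\<exists>K. \<forall>n\<ge>K. R < cmod (\<gamma> n)"
proof -
  obtain K where K: "R / cmod (\<gamma> 0) < q ^ K" using real_arch_pow[OF ratio_gt_1] by blast
  have "R < cmod (\<gamma> n)" if "K \<le> n" for n
  proof -
    have "R < q ^ K * cmod (\<gamma> 0)" using K nonzero_0 by (simp add: pos_divide_less_eq)
    also have "\<dots> \<le> q ^ n * cmod (\<gamma> 0)"
      using that ratio_gt_1 by (intro mult_right_mono power_increasing) auto
    also have "\<dots> \<le> cmod (\<gamma> n)" using norm_growth[of n 0] by simp
    finally show ?thesis .
  qed
  then show ?thesis by blast
qed

lemma annulus_card: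
  assumes "3 < q ^ L" and "0 < \<alpha>"
  shows "finite {n. \<alpha> \<le> cmod (\<gamma> n) \<and> cmod (\<gamma> n) \<le> 3 * \<alpha>}"
    and "card {n. \<alpha> \<le> cmod (\<gamma> n) \<and> cmod (\<gamma> n) \<le> 3 * \<alpha>} \<le> L"
  using geometric_growth_annulus[where r = "\<lambda>n. cmod (\<gamma> n)", OF ratio_gt_1 norm_step assms]
  by auto

lemma summable_H_series:
  assumes a: "a \<in> weighted_l2 v" and "summable v" and v: "\<And>n. 0 \<le> v n"
  shows "summable (\<lambda>n. a n * complex_of_real (v n) / (z - \<gamma> n))"
proof -
  obtain K where K: "\<And>n. K \<le> n \<Longrightarrow> cmod z + 1 < cmod (\<gamma> n)"
    using eventually_norm_gt by blast
  have "summable (\<lambda>n. (cmod (a n))\<^sup>2 * v n + v n)"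
    using a \<open>summable v\<close> unfolding weighted_l2_def by (intro summable_add) auto
  then show ?thesis
  proof (rule summable_comparison_test')
    fix n assume "K \<le> n"
    have "1 \<le> cmod (z - \<gamma> n)"
      using K[OF \<open>K \<le> n\<close>] norm_triangle_ineq2[of "\<gamma> n" z] norm_minus_commute[of "\<gamma> n" z] by linarith
    then have "cmod (a n) * v n / cmod (z - \<gamma> n) \<le> cmod (a n) * v n"
      using v[of n] by (intro divide_left_mono[where b = 1, simplified]) auto
    then have "norm (a n * complex_of_real (v n) / (z - \<gamma> n)) \<le> cmod (a n) * v n"
      using v[of n] by (simp add: norm_mult norm_divide)
    also have "\<dots> \<le> ((cmod (a n))\<^sup>2 + 1) * v n"
    proof (intro mult_right_mono)
      have "0 \<le> (cmod (a n) - 1)\<^sup>2" by simp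
      then have "2 * cmod (a n) \<le> (cmod (a n))\<^sup>2 + 1" unfolding power2_diff by simp
      then show "cmod (a n) \<le> (cmod (a n))\<^sup>2 + 1" using norm_ge_zero[of "a n"] by linarith
    qed (use v in auto)
    finally show "norm (a n * complex_of_real (v n) / (z - \<gamma> n)) \<le> (cmod (a n))\<^sup>2 * v n + v n"
      by (simp add: algebra_simps)
  qed
qed

lemma localized_weights_sum_le:
  assumes "z \<noteq> \<gamma> 0" and v: "\<And>n. 0 \<le> v n" and L: "3 < q ^ L"
  defines "u n \<equiv> v n / (cmod (z - \<gamma> n))\<^sup>2" and "D \<equiv> 16 / (cmod (z - \<gamma> 0))\<^sup>2"
  shows "(\<Sum>n<N. u n / (u n + D)) \<le> (\<Sum>n<N. v n) + L"
proof -
  have D: "0 < D" using \<open>z \<noteq> \<gamma> 0\<close> unfolding D_def by simp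
  have u: "0 \<le> u n" for n using v[of n] unfolding u_def by simp
  define \<alpha> where "\<alpha> = max (cmod (\<gamma> 0)) (cmod z / 2)"
  define Near where "Near = {n. \<alpha> \<le> cmod (\<gamma> n) \<and> cmod (\<gamma> n) \<le> 3 * \<alpha>}"
  have "0 < \<alpha>" using nonzero_0 unfolding \<alpha>_def by (simp add: less_max_iff_disj)
  then have "finite Near" "card Near \<le> L" unfolding Near_def using annulus_card[OF L] by auto
  have term_le: "u n / (u n + D) \<le> v n + (if n \<in> Near then 1 else 0)" for n
  proof (cases "n \<in> Near")
    case True
    have "u n / (u n + D) \<le> 1" using u[of n] D by simp
    then show ?thesis using True v[of n] by simp
  next
    case False
    then have "cmod (z - \<gamma> 0) / 4 \<le> cmod (z - \<gamma> n)"
      using norm_in_annulus_if_close[OF norm_ge_norm_0, of z n] unfolding Near_def \<alpha>_def by fastforce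
    moreover have "0 < cmod (z - \<gamma> 0) / 4" using \<open>z \<noteq> \<gamma> 0\<close> by simp
    ultimately have "u n \<le> v n / (cmod (z - \<gamma> 0) / 4)\<^sup>2"
      unfolding u_def using v[of n] by (intro divide_left_mono power_mono mult_pos_pos) auto
    also have "\<dots> = v n * D" unfolding D_def by (simp add: power_divide)
    finally have "u n \<le> v n * D" .
    have "u n / (u n + D) \<le> u n / D" using u[of n] D by (intro divide_left_mono) auto
    also have "\<dots> \<le> v n" using \<open>u n \<le> v n * D\<close> D by (simp add: divide_le_eq)
    finally show ?thesis using False by simp
  qed
  have "(\<Sum>n<N. u n / (u n + D)) \<le> (\<Sum>n<N. v n) + (\<Sum>n<N. if n \<in> Near then 1 else 0)"
    using sum_mono[OF term_le] by (simp add: sum.distrib)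
  also have "(\<Sum>n<N. if n \<in> Near then 1 else 0 :: real) = card ({..<N} \<inter> Near)"
    by (simp add: sum.If_cases)
  also have "card ({..<N} \<inter> Near) \<le> card Near" using \<open>finite Near\<close> by (intro card_mono) auto
  finally show ?thesis using \<open>card Near \<le> L\<close> by linarith
qed

lemma partial_sum_squared_le:
  assumes "z \<noteq> \<gamma> 0" and v: "\<And>n. 0 \<le> v n" and "summable v" and L: "3 < q ^ L"
  shows "(cmod (\<Sum>n<N. a n * complex_of_real (v n) / (z - \<gamma> n)))\<^sup>2
    \<le> (\<Sum>n<N. (cmod (a n))\<^sup>2 * v n * (v n / (cmod (z - \<gamma> n))\<^sup>2 + 16 / (cmod (z - \<gamma> 0))\<^sup>2))
      * (suminf v + L)"
proof -
  define u where "u n = v n / (cmod (z - \<gamma> n))\<^sup>2" for n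
  define D where "D = 16 / (cmod (z - \<gamma> 0))\<^sup>2"
  have D: "0 < D" using \<open>z \<noteq> \<gamma> 0\<close> unfolding D_def by simp
  have u: "0 \<le> u n" for n using v[of n] unfolding u_def by simp
  have "(cmod (\<Sum>n<N. a n * complex_of_real (v n) / (z - \<gamma> n)))\<^sup>2
      \<le> (\<Sum>n<N. (cmod (a n))\<^sup>2 * v n * (u n + D)) * (\<Sum>n<N. u n / (u n + D))"
  proof (rule norm_sum_squared_le)
    fix n
    have "(cmod (a n * complex_of_real (v n) / (z - \<gamma> n)))\<^sup>2 = (cmod (a n))\<^sup>2 * v n * u n"
      unfolding u_def using v[of n] by (simp add: norm_mult norm_divide power2_eq_square)
    also have "\<dots> = (cmod (a n))\<^sup>2 * v n * (u n + D) * (u n / (u n + D))"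
      using u[of n] D by (simp add: add_nonneg_pos)
    finally show "(cmod (a n * complex_of_real (v n) / (z - \<gamma> n)))\<^sup>2
      \<le> (cmod (a n))\<^sup>2 * v n * (u n + D) * (u n / (u n + D))" by simp
  qed (use u D v in \<open>auto intro: add_nonneg_nonneg\<close>)
  also have "\<dots> \<le> (\<Sum>n<N. (cmod (a n))\<^sup>2 * v n * (u n + D)) * (suminf v + L)"
  proof (intro mult_left_mono sum_nonneg)
    have "(\<Sum>n<N. u n / (u n + D)) \<le> (\<Sum>n<N. v n) + L"
      unfolding u_def D_def using localized_weights_sum_le[OF \<open>z \<noteq> \<gamma> 0\<close> v L] .
    also have "(\<Sum>n<N. v n) \<le> suminf v" using \<open>summable v\<close> v by (intro sum_le_suminf) auto
    finally show "(\<Sum>n<N. u n / (u n + D)) \<le> suminf v + L" by simp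
  qed (use u D v in auto)
  finally show ?thesis unfolding u_def D_def .
qed

lemma H_op_partial_sums_LIMSEQ:
  assumes "a \<in> weighted_l2 v" and "summable v" and "\<And>n. 0 \<le> v n"
  shows "(\<lambda>N. \<Sum>n<N. a n * complex_of_real (v n) / (z - \<gamma> n)) \<longlonglongrightarrow> H_op \<gamma> v a z"
  unfolding H_op_def using summable_H_series[OF assms] by (rule summable_LIMSEQ)

lemma H_op_measurable:
  assumes "a \<in> weighted_l2 v" and "summable v" and "\<And>n. 0 \<le> v n" and "sets \<mu> = sets borel"
  shows "H_op \<gamma> v a \<in> borel_measurable \<mu>"
proof (rule borel_measurable_LIMSEQ_metric[OF _ H_op_partial_sums_LIMSEQ[OF assms(1-3)]])
  show "(\<lambda>z. \<Sum>n<N. a n * complex_of_real (v n) / (z - \<gamma> n)) \<in> borel_measurable \<mu>" for N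
    by (rule borel_measurable_if_sets_borel[OF \<open>sets \<mu> = sets borel\<close>]) measurable
qed

lemma H_op_squared_le:
  assumes "a \<in> weighted_l2 v" and "summable v" and v: "\<And>n. 0 \<le> v n"
    and "3 < q ^ L" and "z \<noteq> \<gamma> 0"
  shows "ennreal ((cmod (H_op \<gamma> v a z))\<^sup>2) \<le> ennreal (suminf v + L) *
    (\<Sum>n. ennreal ((cmod (a n))\<^sup>2 * v n * (v n / (cmod (z - \<gamma> n))\<^sup>2 + 16 / (cmod (z - \<gamma> 0))\<^sup>2)))"
    (is "_ \<le> ennreal ?K * (\<Sum>n. ennreal (?P n))")
proof (rule LIMSEQ_le_const2)
  show "(\<lambda>N. ennreal ((cmod (\<Sum>n<N. a n * complex_of_real (v n) / (z - \<gamma> n)))\<^sup>2))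
      \<longlonglongrightarrow> ennreal ((cmod (H_op \<gamma> v a z))\<^sup>2)"
    by (intro tendsto_ennrealI tendsto_power tendsto_norm H_op_partial_sums_LIMSEQ[OF assms(1-3)])
  have P: "0 \<le> ?P n" for n using v[of n] by simp
  have K: "0 \<le> ?K" using v \<open>summable v\<close> by (simp add: suminf_nonneg)
  show "\<exists>N0. \<forall>N\<ge>N0. ennreal ((cmod (\<Sum>n<N. a n * complex_of_real (v n) / (z - \<gamma> n)))\<^sup>2)
      \<le> ennreal ?K * (\<Sum>n. ennreal (?P n))"
  proof (intro exI allI impI)
    fix N :: nat
    have "ennreal ((cmod (\<Sum>n<N. a n * complex_of_real (v n) / (z - \<gamma> n)))\<^sup>2)
        \<le> ennreal ((\<Sum>n<N. ?P n) * ?K)"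
      using partial_sum_squared_le[OF assms(5,3,2,4)] by (rule ennreal_leI)
    also have "\<dots> = ennreal ?K * (\<Sum>n<N. ennreal (?P n))"
      using P K by (simp add: ennreal_mult mult.commute sum_nonneg)
    also have "\<dots> \<le> ennreal ?K * (\<Sum>n. ennreal (?P n))"
      by (intro mult_left_mono sum_le_suminf) auto
    finally show "ennreal ((cmod (\<Sum>n<N. a n * complex_of_real (v n) / (z - \<gamma> n)))\<^sup>2)
      \<le> ennreal ?K * (\<Sum>n. ennreal (?P n))" .
  qed
qed

lemma H_bounded_if_kernel_integrals_bounded:
  assumes v: "\<And>n. 0 < v n" and "summable v" and "sets \<mu> = sets borel" and "AE z in \<mu>. z \<noteq> \<gamma> 0"
    and bound: "\<And>n. (\<integral>\<^sup>+ z. ennreal (v n / (cmod (z - \<gamma> n))\<^sup>2) \<partial>\<mu>) \<le> ennreal M" and "0 \<le> M"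
  shows "H_bounded \<gamma> v \<mu>"
proof -
  obtain L where L: "3 < q ^ L" using real_arch_pow[OF ratio_gt_1] by blast
  define K where "K = suminf v + L"
  define B where "B = M + 16 * M / v 0"
  have v': "0 \<le> v n" for n using v[of n] by simp
  have "0 \<le> K" unfolding K_def using \<open>summable v\<close> v' by (simp add: suminf_nonneg)
  have "0 \<le> B" unfolding B_def using \<open>0 \<le> M\<close> v[of 0] by simp
  have "(\<integral>\<^sup>+ z. ennreal ((cmod (H_op \<gamma> v a z))\<^sup>2) \<partial>\<mu>)
      \<le> ennreal (K * B * (\<Sum>n. (cmod (a n))\<^sup>2 * v n))" if a: "a \<in> weighted_l2 v" for a
  proof -
    define c where "c n = (cmod (a n))\<^sup>2 * v n" for n
    define P where "P n z = c n * (v n / (cmod (z - \<gamma> n))\<^sup>2 + 16 / (cmod (z - \<gamma> 0))\<^sup>2)" for n z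
    have c: "0 \<le> c n" for n unfolding c_def using v'[of n] by simp
    have "summable c" using a unfolding weighted_l2_def c_def by simp
    have meas: "(\<lambda>z. ennreal (P n z)) \<in> borel_measurable \<mu>" for n
      unfolding P_def by (rule borel_measurable_if_sets_borel[OF \<open>sets \<mu> = sets borel\<close>]) measurable
    have "AE z in \<mu>. ennreal ((cmod (H_op \<gamma> v a z))\<^sup>2) \<le> ennreal K * (\<Sum>n. ennreal (P n z))"
      using \<open>AE z in \<mu>. z \<noteq> \<gamma> 0\<close> unfolding K_def P_def c_def
      by eventually_elim (rule H_op_squared_le[OF a \<open>summable v\<close> v' L])
    then have "(\<integral>\<^sup>+ z. ennreal ((cmod (H_op \<gamma> v a z))\<^sup>2) \<partial>\<mu>)
        \<le> (\<integral>\<^sup>+ z. ennreal K * (\<Sum>n. ennreal (P n z)) \<partial>\<mu>)"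
      by (rule nn_integral_mono_AE)
    also have "\<dots> = ennreal K * (\<Sum>n. \<integral>\<^sup>+ z. ennreal (P n z) \<partial>\<mu>)"
      using meas by (simp add: nn_integral_cmult nn_integral_suminf)
    also have "\<dots> \<le> ennreal K * (\<Sum>n. ennreal (c n * B))"
      unfolding P_def B_def
      by (intro mult_left_mono suminf_le nn_integral_two_kernels_le[OF \<open>sets \<mu> = sets borel\<close>]
          c v' v bound \<open>0 \<le> M\<close>) auto
    also have "(\<Sum>n. ennreal (c n * B)) = ennreal (\<Sum>n. c n * B)"
      using c \<open>0 \<le> B\<close> \<open>summable c\<close> by (intro suminf_ennreal2 summable_mult2) auto
    also have "(\<Sum>n. c n * B) = (\<Sum>n. c n) * B" using \<open>summable c\<close> by (rule suminf_mult2[symmetric])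
    also have "ennreal K * ennreal \<dots> = ennreal (K * B * (\<Sum>n. c n))"
      using \<open>0 \<le> K\<close> by (simp add: ennreal_mult'[symmetric] mult_ac)
    finally show ?thesis unfolding c_def .
  qed
  then show ?thesis
    unfolding H_bounded_def using H_op_measurable[OF _ \<open>summable v\<close> v' \<open>sets \<mu> = sets borel\<close>] by blast
qed

end

lemma lacunary_sequence_INF_ratio:
  fixes \<gamma> :: "nat \<Rightarrow> complex"
  assumes "1 < (INF n. cmod (\<gamma> (Suc n)) / cmod (\<gamma> n))"
  shows "lacunary_sequence \<gamma> (INF n. cmod (\<gamma> (Suc n)) / cmod (\<gamma> n))"
proof -
  define q where "q = (INF n. cmod (\<gamma> (Suc n)) / cmod (\<gamma> n))"
  have "bdd_below (range (\<lambda>n. cmod (\<gamma> (Suc n)) / cmod (\<gamma> n)))"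
    by (rule bdd_belowI[where m = 0]) auto
  then have ratio: "q \<le> cmod (\<gamma> (Suc n)) / cmod (\<gamma> n)" for n
    unfolding q_def by (rule cINF_lower) simp
  \<comment> \<open>As \<open>x / 0 = 0\<close>, a vanishing \<open>\<gamma> n\<close> would make the ratio at \<open>n\<close> equal to \<open>0\<close>.\<close>
  have nonzero: "\<gamma> n \<noteq> 0" for n
    using ratio[of n] assms unfolding q_def by auto
  show ?thesis
    unfolding q_def[symmetric]
  proof
    show "q * cmod (\<gamma> n) \<le> cmod (\<gamma> (Suc n))" for n
      using ratio[of n] nonzero[of n] by (simp add: pos_le_divide_eq)
  qed (use assms nonzero in \<open>simp_all add: q_def\<close>)
qed

lemma H_op_unit_vector: "H_op \<gamma> v (\<lambda>k. if k = n then 1 else 0) z = v n / (z - \<gamma> n)"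
proof -
  have "(\<lambda>k. (if k = n then 1 else 0) * complex_of_real (v k) / (z - \<gamma> k))
      = (\<lambda>k. if k = n then complex_of_real (v k) / (z - \<gamma> k) else 0)"
    by auto
  then show ?thesis unfolding H_op_def by (simp add: sums_unique[OF sums_single, symmetric])
qed

lemma unit_vector_weighted_l2:
  "(\<lambda>k. (cmod (if k = n then 1 else 0 :: complex))\<^sup>2 * v k) sums v n"
proof -
  have "(\<lambda>k. (cmod (if k = n then 1 else 0 :: complex))\<^sup>2 * v k) = (\<lambda>k. if k = n then v k else 0)"
    by auto
  then show ?thesis by (simp add: sums_single)
qed

lemma kernel_integrals_bounded_if_H_bounded:
  assumes "H_bounded \<gamma> v \<mu>" and v: "\<And>n. 0 < v n"
  shows "(SUP n. \<integral>\<^sup>+ z. ennreal (v n / (cmod (z - \<gamma> n))\<^sup>2) \<partial>\<mu>) < \<infinity>"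
proof -
  obtain C where C: "\<And>a. a \<in> weighted_l2 v \<Longrightarrow> H_op \<gamma> v a \<in> borel_measurable \<mu> \<and>
      (\<integral>\<^sup>+ z. ennreal ((cmod (H_op \<gamma> v a z))\<^sup>2) \<partial>\<mu>) \<le> ennreal (C * (\<Sum>n. (cmod (a n))\<^sup>2 * v n))"
    using assms(1) unfolding H_bounded_def by blast
  have "(\<integral>\<^sup>+ z. ennreal (v n / (cmod (z - \<gamma> n))\<^sup>2) \<partial>\<mu>) \<le> ennreal (max C 0)" for n
  proof -
    define e where "e k = (if k = n then 1 else 0 :: complex)" for k
    have "e \<in> weighted_l2 v" and norm_e: "(\<Sum>k. (cmod (e k))\<^sup>2 * v k) = v n"
      using unit_vector_weighted_l2[of n v] unfolding weighted_l2_def e_def by (auto simp: sums_iff)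
    have He: "H_op \<gamma> v e = (\<lambda>z. v n / (z - \<gamma> n))"
      unfolding e_def by (intro ext H_op_unit_vector)
    have kernel: "ennreal (v n / (cmod (z - \<gamma> n))\<^sup>2)
        = ennreal (1 / v n) * ennreal ((cmod (H_op \<gamma> v e z))\<^sup>2)" for z
      using v[of n] by (simp add: He norm_divide power_divide power2_eq_square ennreal_mult'[symmetric])
    have "(\<integral>\<^sup>+ z. ennreal (v n / (cmod (z - \<gamma> n))\<^sup>2) \<partial>\<mu>)
        = ennreal (1 / v n) * (\<integral>\<^sup>+ z. ennreal ((cmod (H_op \<gamma> v e z))\<^sup>2) \<partial>\<mu>)"
      unfolding kernel using conjunct1[OF C[OF \<open>e \<in> weighted_l2 v\<close>]]
      by (intro nn_integral_cmult) measurable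
    also have "\<dots> \<le> ennreal (1 / v n) * ennreal (C * v n)"
      using C[OF \<open>e \<in> weighted_l2 v\<close>] unfolding norm_e by (intro mult_left_mono) auto
    also have "\<dots> \<le> ennreal (1 / v n) * ennreal (max C 0 * v n)"
      using v[of n] by (intro mult_left_mono ennreal_leI mult_right_mono) auto
    also have "\<dots> = ennreal (max C 0)"
      using v[of n] by (simp add: ennreal_mult[symmetric])
    finally show ?thesis .
  qed
  then have "(SUP n. \<integral>\<^sup>+ z. ennreal (v n / (cmod (z - \<gamma> n))\<^sup>2) \<partial>\<mu>) \<le> ennreal (max C 0)"
    by (rule SUP_least)
  then show ?thesis by (rule le_less_trans) simp
qed

theorem corollary2:
  fixes \<gamma> :: "nat \<Rightarrow> complex" and v :: "nat \<Rightarrow> real" and \<mu> :: "complex measure"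
  assumes "inj \<gamma>"
    and "(INF n. cmod (\<gamma> (Suc n)) / cmod (\<gamma> n)) > 1"
    and "\<And>n. v n > 0"
    and "summable v"
    and "sets \<mu> = sets borel"
    and "emeasure \<mu> (range \<gamma>) = 0"
  shows "H_bounded \<gamma> v \<mu> \<longleftrightarrow>
    (SUP n. \<integral>\<^sup>+ z. ennreal (v n / (cmod (z - \<gamma> n))\<^sup>2) \<partial>\<mu>) < \<infinity>"
proof
  assume "H_bounded \<gamma> v \<mu>"
  then show "(SUP n. \<integral>\<^sup>+ z. ennreal (v n / (cmod (z - \<gamma> n))\<^sup>2) \<partial>\<mu>) < \<infinity>"
    using assms(3) by (rule kernel_integrals_bounded_if_H_bounded)
next
  assume "(SUP n. \<integral>\<^sup>+ z. ennreal (v n / (cmod (z - \<gamma> n))\<^sup>2) \<partial>\<mu>) < \<infinity>"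
  then obtain M where "0 \<le> M"
    and M: "(SUP n. \<integral>\<^sup>+ z. ennreal (v n / (cmod (z - \<gamma> n))\<^sup>2) \<partial>\<mu>) = ennreal M"
    unfolding infinity_ennreal_def less_top_ennreal by blast
  interpret lacunary_sequence \<gamma> "INF n. cmod (\<gamma> (Suc n)) / cmod (\<gamma> n)"
    using assms(2) by (rule lacunary_sequence_INF_ratio)
  have "range \<gamma> \<in> sets \<mu>" unfolding assms(5) by (rule sets.countable) auto
  then have "AE z in \<mu>. z \<notin> range \<gamma>" by (intro AE_I'[of "range \<gamma>"]) (auto simp: assms(6))
  then have "AE z in \<mu>. z \<noteq> \<gamma> 0" by eventually_elim auto
  then show "H_bounded \<gamma> v \<mu>"
  proof (rule H_bounded_if_kernel_integrals_bounded[OF assms(3-5)])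
    show "(\<integral>\<^sup>+ z. ennreal (v n / (cmod (z - \<gamma> n))\<^sup>2) \<partial>\<mu>) \<le> ennreal M" for n
      unfolding M[symmetric] by (rule SUP_upper) simp
  qed fact+
qed

end
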